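(* Let $q\geq 2$ be an integer and let $\lambda\in\{0,\ldots,q-1\}$. Then for every $a\in\mathbb{N}$, $$u_q(aq+\lambda)=q\,u_q(a)+(\lambda+1-q)w_q(a)+\frac{q}{2}a^2+\left(\lambda+1-\frac{q}{2}\right)a = q\,u_q(a)+(\lambda+1-q)w_q(a)+q\frac{a(a+1)}{2}+(\lambda+1-q)a.$$
   Context: For an integer $q\geq 2$ and $n\in\mathbb{N}=\{0,1,2,\ldots\}$: $v_q(0)=0$ and, for $n>0$, $v_q(n)=\max\{k\in\mathbb{N}: q^k \text{ divides } n\}$; $w_q(n)=\sum_{i=0}^n v_q(i)$; $u_q(n)=\sum_{i=0}^n w_q(i)$. *)

theory Defs
  imports Complex_Main
begin

definition v :: "nat \<Rightarrow> nat \<Rightarrow> nat" where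
  "v q n = (if n = 0 then 0 else (GREATEST k. q ^ k dvd n))"

definition w :: "nat \<Rightarrow> nat \<Rightarrow> nat" where
  "w q n = (\<Sum>i=0..n. v q i)"

definition u :: "nat \<Rightarrow> nat \<Rightarrow> nat" where
  "u q n = (\<Sum>i=0..n. w q i)"

end

theory Submission
  imports Defs
begin

text \<open>Among \<open>0, \<dots>, a*q + l\<close> only the multiples \<open>b*q\<close> contribute to \<open>w\<close>, each with
  \<open>v q (b*q) = v q b + 1\<close>; hence \<open>w q (a*q + l) = w q a + a\<close> for \<open>l < q\<close>. So \<open>w\<close> is
  constant on each block \<open>b*q, \<dots>, b*q + q - 1\<close>, and summing it over \<open>a\<close> complete blocks
  and the \<open>l + 1\<close> terms of the last one expresses \<open>u q (a*q + l)\<close> through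
  \<open>\<Sum>b<a. w q b = u q a - w q a\<close> and the Gauss sum \<open>\<Sum>b<a. b\<close>.\<close>

lemma v_eqI:
  assumes "n > 0" "q ^ k dvd n" "\<not> q ^ Suc k dvd n"
  shows "v q n = k"
proof -
  have "(GREATEST k. q ^ k dvd n) = k"
  proof (rule Greatest_equality)
    fix j assume "q ^ j dvd n"
    show "j \<le> k"
    proof (rule ccontr)
      assume "\<not> j \<le> k"
      then have "q ^ Suc k dvd q ^ j" by (intro le_imp_power_dvd) simp
      with \<open>q ^ j dvd n\<close> assms(3) show False using dvd_trans by blast
    qed
  qed (fact assms(2))
  with assms(1) show ?thesis by (simp add: v_def)
qed

lemma power_v_dvd_and_not_power_Suc_v_dvd:
  assumes "n > 0" "q \<ge> 2"
  shows "q ^ v q n dvd n \<and> \<not> q ^ Suc (v q n) dvd n"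
proof -
  have bounded: "k \<le> n" if "q ^ k dvd n" for k
  proof -
    have "k < 2 ^ k" by simp
    also have "\<dots> \<le> q ^ k" using assms(2) by (simp add: power_mono)
    also have "\<dots> \<le> n" using that assms(1) by (simp add: dvd_imp_le)
    finally show ?thesis by simp
  qed
  have "q ^ (GREATEST k. q ^ k dvd n) dvd n"
    by (rule GreatestI_nat[where k = 0]) (auto intro: bounded)
  moreover have "\<not> q ^ Suc (GREATEST k. q ^ k dvd n) dvd n"
    using Greatest_le_nat[of "\<lambda>k. q ^ k dvd n" _ n] bounded by fastforce
  ultimately show ?thesis using assms(1) by (simp add: v_def)
qed

lemma v_mult_base:
  assumes "m > 0" "q \<ge> 2"
  shows "v q (m * q) = Suc (v q m)"
proof (rule v_eqI)
  have dvd: "q ^ v q m dvd m" and not_dvd: "\<not> q ^ Suc (v q m) dvd m"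
    using power_v_dvd_and_not_power_Suc_v_dvd[OF assms] by blast+
  show "m * q > 0" using assms by simp
  show "q ^ Suc (v q m) dvd m * q" using dvd by (simp add: mult.commute mult_dvd_mono)
  show "\<not> q ^ Suc (Suc (v q m)) dvd m * q"
    using not_dvd assms(2) by (simp add: mult.commute)
qed

lemma v_eq_0_if_not_dvd:
  assumes "\<not> q dvd n"
  shows "v q n = 0"
proof (cases "n = 0")
  case False
  then show ?thesis using assms by (intro v_eqI) auto
qed (simp add: v_def)

lemma w_Suc: "w q (Suc n) = w q n + v q (Suc n)"
  by (simp add: w_def)

lemma w_mult_base_add:
  assumes "q \<ge> 2" "l < q"
  shows "w q (a * q + l) = w q a + a"
proof -
  have digit: "w q (a * q + l) = w q (a * q)" if "l < q" for a l
    using that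
  proof (induction l)
    case (Suc l)
    have "\<not> q dvd Suc (a * q + l)"
      using Suc.prems by (metis add_Suc_right dvd_add_times_triv_left_iff dvd_imp_le zero_less_Suc
          not_less)
    then show ?case using Suc by (simp add: w_Suc v_eq_0_if_not_dvd)
  qed simp
  have "w q (a * q) = w q a + a"
  proof (induction a)
    case 0 then show ?case by (simp add: w_def v_def)
  next
    case (Suc a)
    have "Suc a * q = Suc (a * q + (q - 1))" using assms(1) by simp
    then have "w q (Suc a * q) = w q (a * q + (q - 1)) + v q (Suc a * q)"
      by (metis w_Suc)
    also have "\<dots> = w q a + a + Suc (v q (Suc a))"
      using digit[of "q - 1" a] assms(1) Suc.IH v_mult_base[of "Suc a" q] by simp
    finally show ?case by (simp add: w_Suc)
  qed
  with digit[OF assms(2)] show ?thesis by simp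
qed

lemma u_mult_base_add:
  assumes "q \<ge> 2" "l < q"
  shows "u q (a * q + l) = q * (\<Sum>b<a. w q b + b) + Suc l * (w q a + a)"
proof -
  have block: "(\<Sum>i\<in>{b*q..<b*q+q}. w q i) = q * (w q b + b)" for b
  proof -
    have "w q i = w q b + b" if "i \<in> {b*q..<b*q+q}" for i
      using that w_mult_base_add[OF assms(1), of "i - b*q" b] by auto
    then show ?thesis by simp
  qed
  have last_block: "(\<Sum>i\<in>{a*q..a*q+l}. w q i) = Suc l * (w q a + a)"
  proof -
    have "w q i = w q a + a" if "i \<in> {a*q..a*q+l}" for i
      using that assms(2) w_mult_base_add[OF assms(1), of "i - a*q" a] by auto
    then show ?thesis by simp
  qed
  have "{0..a*q+l} = {..<a*q} \<union> {a*q..a*q+l}" by auto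
  then have "u q (a * q + l) = (\<Sum>i<a*q. w q i) + (\<Sum>i\<in>{a*q..a*q+l}. w q i)"
    unfolding u_def by (simp add: sum.union_disjoint ivl_disj_int)
  also have "(\<Sum>i<a*q. w q i) = (\<Sum>b<a. \<Sum>i\<in>{b*q..<b*q+q}. w q i)"
    by (rule sum.nat_group[symmetric])
  finally show ?thesis by (simp add: block last_block sum_distrib_left)
qed

lemma u_eq_sum_lessThan: "u q a = (\<Sum>b<a. w q b) + w q a"
  by (simp add: u_def atLeast0AtMost lessThan_Suc_atMost[symmetric])

lemma sum_lessThan_real: "(\<Sum>b<a. real b) = real a * (real a - 1) / 2"
  by (induction a) (simp_all add: field_simps)

theorem lemma2p2:
  fixes q l a :: nat
  assumes "q \<ge> 2" and "l \<le> q - 1"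
  shows "real (u q (a * q + l)) =
           real q * real (u q a) + (real l + 1 - real q) * real (w q a)
           + real q / 2 * (real a)^2 + (real l + 1 - real q / 2) * real a
       \<and> real (u q (a * q + l)) =
           real q * real (u q a) + (real l + 1 - real q) * real (w q a)
           + real q * (real a * (real a + 1) / 2) + (real l + 1 - real q) * real a"
proof -
  have "l < q" using assms by simp
  then have "real (u q (a * q + l)) = real q * (real (u q a) - real (w q a))
      + real q * (real a * (real a - 1) / 2) + (real l + 1) * (real (w q a) + real a)"
    using u_mult_base_add[OF assms(1)] u_eq_sum_lessThan[of q a]
    by (simp add: sum.distrib sum_lessThan_real algebra_simps)
  then show ?thesis
    by (simp add: field_simps power2_eq_square)
qed

end
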